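(* Let $\mathfrak{n}$ be the real $7$-dimensional Lie algebra with basis $e_1,\dots,e_7$ whose nonzero brackets (up to antisymmetry) are $[e_1,e_2]=e_4$, $[e_1,e_3]=e_5$, $[e_1,e_4]=e_6$, $[e_1,e_6]=e_7$, $[e_2,e_3]=e_6$, $[e_2,e_4]=e_7$, $[e_2,e_5]=\tfrac12 e_7$, $[e_3,e_4]=-\tfrac12 e_7$. Then $\mathfrak{n}$ is not an Einstein nilradical.
   Context: A real nilpotent Lie algebra $\mathfrak{n}$ is called an Einstein nilradical if it admits an inner product such that the left-invariant Riemannian metric it defines on the simply connected nilpotent Lie group with Lie algebra $\mathfrak{n}$ is a nilsoliton, i.e. its Ricci operator satisfies $\mathrm{Ric}=c\,\mathrm{Id}+D$ for some $c\in\mathbb{R}$ and some derivation $D$ of $\mathfrak{n}$. Brackets of basis elements not listed are zero. *)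

theory Defs
  imports "HOL-Analysis.Analysis"
begin

definition is_inner_product :: "('a::real_vector \<Rightarrow> 'a \<Rightarrow> real) \<Rightarrow> bool" where
  "is_inner_product ip \<longleftrightarrow> bilinear ip \<and> (\<forall>x y. ip x y = ip y x) \<and> (\<forall>x. x \<noteq> 0 \<longrightarrow> ip x x > 0)"

text \<open>Levi-Civita connection of the left-invariant metric, on left-invariant fields,
  given by the Koszul formula
  2<nabla_X Y, Z> = <[X,Y],Z> - <[Y,Z],X> + <[Z,X],Y>.\<close>
definition lc_conn ::
  "('a::real_vector \<Rightarrow> 'a \<Rightarrow> 'a) \<Rightarrow> ('a \<Rightarrow> 'a \<Rightarrow> real) \<Rightarrow> 'a \<Rightarrow> 'a \<Rightarrow> 'a" where
  "lc_conn br ip X Y = (THE W. \<forall>Z. ip W Z =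
      (ip (br X Y) Z - ip (br Y Z) X + ip (br Z X) Y) / 2)"

definition curv ::
  "('a::real_vector \<Rightarrow> 'a \<Rightarrow> 'a) \<Rightarrow> ('a \<Rightarrow> 'a \<Rightarrow> real) \<Rightarrow> 'a \<Rightarrow> 'a \<Rightarrow> 'a \<Rightarrow> 'a" where
  "curv br ip X Y Z = lc_conn br ip X (lc_conn br ip Y Z) - lc_conn br ip Y (lc_conn br ip X Z)
      - lc_conn br ip (br X Y) Z"

definition trace_op :: "(real^'n \<Rightarrow> real^'n) \<Rightarrow> real" where
  "trace_op f = (\<Sum>i\<in>UNIV. f (axis i 1) $ i)"

definition ric_tensor ::
  "(real^'n \<Rightarrow> real^'n \<Rightarrow> real^'n) \<Rightarrow> (real^'n \<Rightarrow> real^'n \<Rightarrow> real) \<Rightarrow> real^'n \<Rightarrow> real^'n \<Rightarrow> real" where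
  "ric_tensor br ip Y Z = trace_op (\<lambda>X. curv br ip X Y Z)"

definition is_derivation :: "('a::real_vector \<Rightarrow> 'a \<Rightarrow> 'a) \<Rightarrow> ('a \<Rightarrow> 'a) \<Rightarrow> bool" where
  "is_derivation br D \<longleftrightarrow> linear D \<and> (\<forall>x y. D (br x y) = br (D x) y + br x (D y))"

text \<open>Nilsoliton: the Ricci operator Ric (defined by <Ric Y, Z> = ric(Y,Z)) equals c Id + D
  for some real c and some derivation D.\<close>
definition is_nilsoliton ::
  "(real^'n \<Rightarrow> real^'n \<Rightarrow> real^'n) \<Rightarrow> (real^'n \<Rightarrow> real^'n \<Rightarrow> real) \<Rightarrow> bool" where
  "is_nilsoliton br ip \<longleftrightarrow> (\<exists>c D. is_derivation br D \<and>
      (\<forall>Y Z. ric_tensor br ip Y Z = ip (c *\<^sub>R Y + D Y) Z))"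

definition einstein_nilradical :: "(real^'n \<Rightarrow> real^'n \<Rightarrow> real^'n) \<Rightarrow> bool" where
  "einstein_nilradical br \<longleftrightarrow> (\<exists>ip. is_inner_product ip \<and> is_nilsoliton br ip)"

definition ebas :: "nat \<Rightarrow> real^7" where
  "ebas k = axis (of_nat (k - 1)) 1"

definition coord :: "nat \<Rightarrow> real^7 \<Rightarrow> real" where
  "coord k x = x $ (of_nat (k - 1))"

definition cpos :: "nat \<Rightarrow> nat \<Rightarrow> real^7" where
  "cpos i j =
    (if (i, j) = (1, 2) then ebas 4
     else if (i, j) = (1, 3) then ebas 5
     else if (i, j) = (1, 4) then ebas 6
     else if (i, j) = (1, 6) then ebas 7
     else if (i, j) = (2, 3) then ebas 6
     else if (i, j) = (2, 4) then ebas 7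
     else if (i, j) = (2, 5) then (1/2) *\<^sub>R ebas 7
     else if (i, j) = (3, 4) then (- 1/2) *\<^sub>R ebas 7
     else 0)"

definition cbr :: "nat \<Rightarrow> nat \<Rightarrow> real^7" where
  "cbr i j = (if i < j then cpos i j else if j < i then - cpos j i else 0)"

definition nbr :: "real^7 \<Rightarrow> real^7 \<Rightarrow> real^7" where
  "nbr x y = (\<Sum>i\<in>{1..7}. \<Sum>j\<in>{1..7}. (coord i x * coord j y) *\<^sub>R cbr i j)"

end

theory Submission
  imports Defs
begin

text \<open>
  Every derivation of the algebra preserves the flag \<open>F\<^sub>k = span(e\<^sub>k, ..., e\<^sub>7)\<close> and acts on
  \<open>F\<^sub>k / F\<^sub>k\<^sub>+\<^sub>1\<close> as \<open>t d\<^sub>k\<close> with \<open>d = (1,2,2,3,3,4,5)\<close>. In an orthonormal basis \<open>u\<^sub>1, ..., u\<^sub>7\<close>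
  adapted to this flag the structure constants \<open>\<mu>\<^sub>i\<^sub>j\<^sub>k = <[u\<^sub>i, u\<^sub>j], u\<^sub>k>\<close> vanish unless \<open>k\<close> lies
  strictly deeper in the flag than \<open>i\<close> and \<open>j\<close>, so the Ricci tensor takes the nilpotent form
  \<open>ric(u\<^sub>l, u\<^sub>j) = 1/4 \<Sum> \<mu>\<^sub>i\<^sub>p\<^sub>l \<mu>\<^sub>i\<^sub>p\<^sub>j - 1/2 \<Sum> \<mu>\<^sub>l\<^sub>p\<^sub>k \<mu>\<^sub>j\<^sub>p\<^sub>k\<close>.
  If \<open>Ric = c Id + D\<close>, the diagonal of \<open>Ric\<close> in this basis is \<open>c + t d\<^sub>k\<close>, and three linear
  functionals of \<open>Ric\<close> can be evaluated in two ways. The trace gives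
  \<open>7c + 20t = -1/4 \<Sum> \<mu>\<^sup>2 < 0\<close>, because \<open>\<mu>\<^sub>1\<^sub>2\<^sub>4 \<noteq> 0\<close>. The trace weighted by \<open>w = (1,1,2,2,3,3,4)\<close>, which
  satisfies \<open>w\<^sub>i + w\<^sub>j \<le> w\<^sub>k\<close> whenever \<open>\<mu>\<^sub>i\<^sub>j\<^sub>k \<noteq> 0\<close>, gives \<open>16c + 54t \<ge> 0\<close>. Finally \<open>tr (Ric D) = 0\<close>,
  as for every derivation of a nilpotent algebra, gives \<open>20ct + 68t\<^sup>2 = 0\<close>. These three conditions
  have no real solution.
\<close>

section \<open>Levi-Civita connection and Ricci tensor in an orthonormal frame\<close>

definition koszul_form ::
  "('a::real_vector \<Rightarrow> 'a \<Rightarrow> 'a) \<Rightarrow> ('a \<Rightarrow> 'a \<Rightarrow> real) \<Rightarrow> 'a \<Rightarrow> 'a \<Rightarrow> 'a \<Rightarrow> real" where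
  "koszul_form br ip X Y Z = (ip (br X Y) Z - ip (br Y Z) X + ip (br Z X) Y) / 2"

definition structure_constant ::
  "('a::real_vector \<Rightarrow> 'a \<Rightarrow> 'a) \<Rightarrow> ('a \<Rightarrow> 'a \<Rightarrow> real) \<Rightarrow> ('i \<Rightarrow> 'a) \<Rightarrow> 'i \<Rightarrow> 'i \<Rightarrow> 'i \<Rightarrow> real"
  where "structure_constant br ip u i j k = ip (br (u i) (u j)) (u k)"

definition koszul_coeff :: "('i \<Rightarrow> 'i \<Rightarrow> 'i \<Rightarrow> real) \<Rightarrow> 'i \<Rightarrow> 'i \<Rightarrow> 'i \<Rightarrow> real" where
  "koszul_coeff \<mu> a b c = (\<mu> a b c - \<mu> b c a + \<mu> c a b) / 2"

lemma koszul_form_frame: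
  "koszul_form br ip (u a) (u b) (u c) = koszul_coeff (structure_constant br ip u) a b c"
  unfolding koszul_form_def koszul_coeff_def structure_constant_def ..

lemma sum_rotate_3: "(\<Sum>a\<in>A. \<Sum>b\<in>B. \<Sum>c\<in>C. f a b c) = (\<Sum>b\<in>B. \<Sum>c\<in>C. \<Sum>a\<in>A. f a b c)"
  by (subst sum.swap) (rule sum.cong[OF refl], rule sum.swap)

locale inner_product_form =
  fixes ip :: "'a::real_vector \<Rightarrow> 'a \<Rightarrow> real"
  assumes is_inner_product: "is_inner_product ip"
begin

lemma bilinear_ip: "bilinear ip"
  using is_inner_product unfolding is_inner_product_def by simp

lemma ip_commute: "ip x y = ip y x"
  using is_inner_product unfolding is_inner_product_def by simp

lemma ip_self_pos: "x \<noteq> 0 \<Longrightarrow> ip x x > 0"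
  using is_inner_product unfolding is_inner_product_def by simp

lemma ip_self_eq_0_iff: "ip x x = 0 \<longleftrightarrow> x = 0"
  using ip_self_pos bilinear_lzero[OF bilinear_ip] by fastforce

lemma ip_sum_left: "ip (sum f S) z = (\<Sum>i\<in>S. ip (f i) z)"
  using linear_sum[of "\<lambda>x. ip x z"] bilinear_ip by (simp add: bilinear_def)

lemma ip_sum_right: "ip z (sum f S) = (\<Sum>i\<in>S. ip z (f i))"
  using linear_sum[of "ip z"] bilinear_ip by (simp add: bilinear_def)

lemmas ip_simps =
  bilinear_ladd[OF bilinear_ip] bilinear_radd[OF bilinear_ip]
  bilinear_lsub[OF bilinear_ip] bilinear_rsub[OF bilinear_ip]
  bilinear_lmul[OF bilinear_ip] bilinear_rmul[OF bilinear_ip]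
  bilinear_lneg[OF bilinear_ip] bilinear_rneg[OF bilinear_ip]
  bilinear_lzero[OF bilinear_ip] bilinear_rzero[OF bilinear_ip]
  ip_sum_left ip_sum_right

lemma ip_residual_frame:
  assumes orth: "\<And>i j. i \<in> K \<Longrightarrow> j \<in> K \<Longrightarrow> ip (u i) (u j) = (if i = j then 1 else 0)"
    and "finite K" "j \<in> K"
  shows "ip (e - (\<Sum>k\<in>K. ip e (u k) *\<^sub>R u k)) (u j) = 0"
proof -
  have "(\<Sum>k\<in>K. ip e (u k) * ip (u k) (u j)) = (\<Sum>k\<in>K. if k = j then ip e (u k) else 0)"
    by (rule sum.cong) (auto simp: orth \<open>j \<in> K\<close>)
  then show ?thesis
    using assms(2,3) by (simp add: ip_simps)
qed

lemma frame_expansion_insert: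
  assumes expand: "\<And>y. y \<in> S \<Longrightarrow> y = (\<Sum>k\<in>K. ip y (u k) *\<^sub>R u k)"
    and unit: "ip w w = 1" and orth: "\<And>k. k \<in> K \<Longrightarrow> ip w (u k) = 0"
    and "finite K" "n \<notin> K" and x: "x - c *\<^sub>R w \<in> S"
  shows "x = (\<Sum>k\<in>insert n K. ip x ((u(n := w)) k) *\<^sub>R (u(n := w)) k)"
proof -
  define y where "y = x - c *\<^sub>R w"
  have y: "y = (\<Sum>k\<in>K. ip y (u k) *\<^sub>R u k)"
    using expand x unfolding y_def by blast
  have "ip y w = (\<Sum>k\<in>K. ip y (u k) * ip (u k) w)"
    by (subst y) (simp add: ip_simps)
  also have "\<dots> = 0"
    using orth by (simp add: ip_commute[of _ w])
  finally have "ip x w = c"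
    unfolding y_def using unit by (simp add: ip_simps)
  moreover have "ip x (u k) = ip y (u k)" if "k \<in> K" for k
    unfolding y_def using orth[OF that] by (simp add: ip_simps ip_commute[of w])
  moreover have "(\<Sum>k\<in>K. ip x ((u(n := w)) k) *\<^sub>R (u(n := w)) k) = (\<Sum>k\<in>K. ip x (u k) *\<^sub>R u k)"
    using \<open>n \<notin> K\<close> by (intro sum.cong) auto
  ultimately show ?thesis
    using assms(4,5) y by (simp add: y_def)
qed

end

locale orthonormal_frame = inner_product_form ip
  for ip :: "real^'n \<Rightarrow> real^'n \<Rightarrow> real" +
  fixes u :: "'i \<Rightarrow> real^'n" and I :: "'i set"
  assumes orthonormal: "i \<in> I \<Longrightarrow> j \<in> I \<Longrightarrow> ip (u i) (u j) = (if i = j then 1 else 0)"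
    and frame_expansion: "x = (\<Sum>k\<in>I. ip x (u k) *\<^sub>R u k)"
begin

lemma parseval: "ip x y = (\<Sum>k\<in>I. ip x (u k) * ip y (u k))"
proof -
  have "ip x y = ip x (\<Sum>k\<in>I. ip y (u k) *\<^sub>R u k)"
    using frame_expansion[of y] by simp
  then show ?thesis by (simp add: ip_simps mult.commute)
qed

lemma linear_frame_expansion:
  assumes "linear f"
  shows "f x = (\<Sum>k\<in>I. ip x (u k) *\<^sub>R f (u k))"
proof -
  have "f x = f (\<Sum>k\<in>I. ip x (u k) *\<^sub>R u k)"
    using frame_expansion[of x] by simp
  then show ?thesis
    by (simp add: linear_sum[OF assms] linear_scale[OF assms])
qed

lemma ip_linear_frame:
  assumes "linear D"
  shows "ip (D y) x = (\<Sum>j\<in>I. \<Sum>l\<in>I. ip (D (u j)) (u l) * (ip x (u l) * ip y (u j)))"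
proof -
  have "ip (D y) x = (\<Sum>j\<in>I. ip y (u j) * ip (D (u j)) x)"
    by (subst linear_frame_expansion[OF assms]) (simp add: ip_simps)
  then show ?thesis
    by (simp add: parseval[of "D (u _)" x] sum_distrib_left sum_distrib_right ip_commute[of x] mult_ac)
qed

lemma trace_op_frame:
  assumes "linear f"
  shows "trace_op f = (\<Sum>j\<in>I. ip (f (u j)) (u j))"
proof -
  have "f (axis i 1) $ i = (\<Sum>j\<in>I. ip (axis i 1) (u j) * f (u j) $ i)" for i
    by (subst linear_frame_expansion[OF assms]) (simp add: sum_component)
  then have "trace_op f = (\<Sum>i\<in>UNIV. \<Sum>j\<in>I. ip (axis i 1) (u j) * f (u j) $ i)"
    unfolding trace_op_def by simp
  also have "\<dots> = (\<Sum>j\<in>I. ip (\<Sum>i\<in>UNIV. f (u j) $ i *\<^sub>R axis i 1) (u j))"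
    by (subst sum.swap) (simp add: ip_simps mult.commute)
  also have "\<dots> = (\<Sum>j\<in>I. ip (f (u j)) (u j))"
    using basis_expansion[of "f (u _)"] by (simp add: scalar_mult_eq_scaleR)
  finally show ?thesis .
qed

end

locale bracket_frame = orthonormal_frame ip u I
  for ip :: "real^'n \<Rightarrow> real^'n \<Rightarrow> real" and u :: "'i \<Rightarrow> real^'n" and I +
  fixes br :: "real^'n \<Rightarrow> real^'n \<Rightarrow> real^'n"
  assumes bilinear_br: "bilinear br"
begin

abbreviation \<mu> where "\<mu> \<equiv> structure_constant br ip u"

lemmas br_simps =
  bilinear_ladd[OF bilinear_br] bilinear_radd[OF bilinear_br]
  bilinear_lmul[OF bilinear_br] bilinear_rmul[OF bilinear_br]

lemma linear_koszul_form_1: "linear (\<lambda>X. koszul_form br ip X Y Z)"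
  and linear_koszul_form_2: "linear (\<lambda>Y. koszul_form br ip X Y Z)"
  and linear_koszul_form_3: "linear (\<lambda>Z. koszul_form br ip X Y Z)"
  by (auto intro!: linearI simp: koszul_form_def br_simps ip_simps field_simps)

lemma koszul_form_sum_1:
  "koszul_form br ip (\<Sum>k\<in>S. c k *\<^sub>R v k) Y Z = (\<Sum>k\<in>S. c k * koszul_form br ip (v k) Y Z)"
  and koszul_form_sum_2:
  "koszul_form br ip X (\<Sum>k\<in>S. c k *\<^sub>R v k) Z = (\<Sum>k\<in>S. c k * koszul_form br ip X (v k) Z)"
  and koszul_form_sum_3:
  "koszul_form br ip X Y (\<Sum>k\<in>S. c k *\<^sub>R v k) = (\<Sum>k\<in>S. c k * koszul_form br ip X Y (v k))"
  by (simp_all add: linear_sum[OF linear_koszul_form_1] linear_scale[OF linear_koszul_form_1]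
      linear_sum[OF linear_koszul_form_2] linear_scale[OF linear_koszul_form_2]
      linear_sum[OF linear_koszul_form_3] linear_scale[OF linear_koszul_form_3])

lemma ip_koszul_frame:
  "ip (\<Sum>k\<in>I. koszul_form br ip X Y (u k) *\<^sub>R u k) Z = koszul_form br ip X Y Z"
proof -
  have "ip (\<Sum>k\<in>I. koszul_form br ip X Y (u k) *\<^sub>R u k) Z
      = koszul_form br ip X Y (\<Sum>k\<in>I. ip Z (u k) *\<^sub>R u k)"
    by (simp add: ip_simps koszul_form_sum_3 ip_commute[of _ Z] mult.commute)
  then show ?thesis
    using frame_expansion[of Z] by simp
qed

text \<open>Nondegeneracy of the inner product is what makes the \<open>THE\<close> in \<open>lc_conn\<close> well defined.\<close>

lemma lc_conn_frame:
  "lc_conn br ip X Y = (\<Sum>k\<in>I. koszul_form br ip X Y (u k) *\<^sub>R u k)"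
proof -
  let ?W = "\<Sum>k\<in>I. koszul_form br ip X Y (u k) *\<^sub>R u k"
  have unique: "W = ?W" if "\<forall>Z. ip W Z = koszul_form br ip X Y Z" for W
  proof -
    have "ip (W - ?W) (W - ?W) = 0"
      using that ip_koszul_frame by (simp add: ip_simps)
    then show ?thesis by (simp add: ip_self_eq_0_iff)
  qed
  show ?thesis
    unfolding lc_conn_def koszul_form_def[symmetric]
    by (rule the_equality) (use ip_koszul_frame unique in auto)
qed

lemma ip_lc_conn: "ip (lc_conn br ip X Y) Z = koszul_form br ip X Y Z"
  by (simp add: lc_conn_frame ip_koszul_frame)

lemma bilinear_lc_conn: "bilinear (lc_conn br ip)"
  unfolding bilinear_def lc_conn_frame
  by (auto intro!: linearI simp: linear_add[OF linear_koszul_form_1] linear_scale[OF linear_koszul_form_1]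
      linear_add[OF linear_koszul_form_2] linear_scale[OF linear_koszul_form_2]
      scaleR_add_left sum.distrib scaleR_sum_right)

lemma linear_curv: "linear (\<lambda>X. curv br ip X Y Z)"
  using bilinear_lc_conn bilinear_br
  by (auto intro!: linearI simp: curv_def bilinear_ladd bilinear_lmul bilinear_radd bilinear_rmul
      algebra_simps)

lemma ric_tensor_koszul:
  "ric_tensor br ip Y Z = (\<Sum>i\<in>I. koszul_form br ip (u i) (lc_conn br ip Y Z) (u i)
      - koszul_form br ip Y (lc_conn br ip (u i) Z) (u i) - koszul_form br ip (br (u i) Y) Z (u i))"
  unfolding ric_tensor_def
  by (subst trace_op_frame[OF linear_curv]) (simp add: curv_def ip_simps ip_lc_conn)

lemma linear_ric_tensor: "linear (\<lambda>Y. ric_tensor br ip Y Z)"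
  using bilinear_lc_conn bilinear_br
  by (auto intro!: linearI simp: ric_tensor_koszul bilinear_ladd bilinear_lmul bilinear_radd
      bilinear_rmul linear_add[OF linear_koszul_form_1] linear_scale[OF linear_koszul_form_1]
      linear_add[OF linear_koszul_form_2] linear_scale[OF linear_koszul_form_2]
      sum.distrib[symmetric] sum_distrib_left algebra_simps)

lemma ric_tensor_frame:
  "ric_tensor br ip (u l) (u j) =
    (\<Sum>i\<in>I. (\<Sum>k\<in>I. koszul_coeff \<mu> l j k * koszul_coeff \<mu> i k i)
        - (\<Sum>k\<in>I. koszul_coeff \<mu> i j k * koszul_coeff \<mu> l k i)
        - (\<Sum>m\<in>I. \<mu> i l m * koszul_coeff \<mu> m j i))"
proof -
  have "br (u i) (u l) = (\<Sum>m\<in>I. \<mu> i l m *\<^sub>R u m)" for i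
    unfolding structure_constant_def by (rule frame_expansion)
  then show ?thesis
    unfolding ric_tensor_koszul lc_conn_frame
    by (simp add: koszul_form_sum_1 koszul_form_sum_2 koszul_form_frame)
qed

lemma sum_ip_derivation_brackets:
  assumes lin: "linear D"
  shows "(\<Sum>j\<in>I. \<Sum>l\<in>I. ip (D (u j)) (u l) * (\<Sum>i\<in>I. \<Sum>p\<in>I. \<mu> i p l * \<mu> i p j))
      = (\<Sum>i\<in>I. \<Sum>p\<in>I. ip (D (br (u i) (u p))) (br (u i) (u p)))"
proof -
  have "(\<Sum>j\<in>I. \<Sum>l\<in>I. ip (D (u j)) (u l) * (\<Sum>i\<in>I. \<Sum>p\<in>I. \<mu> i p l * \<mu> i p j))
      = (\<Sum>j\<in>I. \<Sum>i\<in>I. \<Sum>p\<in>I. \<Sum>l\<in>I. ip (D (u j)) (u l) * (\<mu> i p l * \<mu> i p j))"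
    unfolding sum_distrib_left by (intro sum.cong refl sum_rotate_3)
  also have "\<dots> = (\<Sum>i\<in>I. \<Sum>p\<in>I. \<Sum>j\<in>I. \<Sum>l\<in>I. ip (D (u j)) (u l) * (\<mu> i p l * \<mu> i p j))"
    by (rule sum_rotate_3)
  moreover have "ip (D (br (u i) (u p))) (br (u i) (u p))
      = (\<Sum>j\<in>I. \<Sum>l\<in>I. ip (D (u j)) (u l) * (\<mu> i p l * \<mu> i p j))" for i p
    unfolding structure_constant_def by (rule ip_linear_frame[OF lin])
  ultimately show ?thesis
    by simp
qed

lemma sum_ip_brackets_derivation:
  assumes lin: "linear D"
  shows "(\<Sum>j\<in>I. \<Sum>l\<in>I. ip (D (u j)) (u l) * (\<Sum>p\<in>I. \<Sum>k\<in>I. \<mu> l p k * \<mu> j p k))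
      = (\<Sum>j\<in>I. \<Sum>p\<in>I. ip (br (D (u j)) (u p)) (br (u j) (u p)))"
proof -
  have "ip (br (D (u j)) (u p)) (u k) = (\<Sum>l\<in>I. ip (D (u j)) (u l) * \<mu> l p k)" for j p k
  proof -
    have "linear ((\<lambda>v. ip v (u k)) \<circ> (\<lambda>X. br X (u p)))"
      using bilinear_ip bilinear_br by (intro linear_compose) (auto simp: bilinear_def)
    then show ?thesis
      unfolding structure_constant_def
      by (subst linear_frame_expansion[where f = "\<lambda>X. ip (br X (u p)) (u k)"]) (auto simp: o_def)
  qed
  moreover have "(\<Sum>j\<in>I. \<Sum>l\<in>I. ip (D (u j)) (u l) * (\<Sum>p\<in>I. \<Sum>k\<in>I. \<mu> l p k * \<mu> j p k))
      = (\<Sum>j\<in>I. \<Sum>p\<in>I. \<Sum>k\<in>I. \<Sum>l\<in>I. ip (D (u j)) (u l) * (\<mu> l p k * \<mu> j p k))"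
    unfolding sum_distrib_left by (intro sum.cong refl sum_rotate_3)
  moreover have "ip (br (D (u j)) (u p)) (br (u j) (u p))
      = (\<Sum>k\<in>I. ip (br (D (u j)) (u p)) (u k) * \<mu> j p k)" for j p
    unfolding structure_constant_def by (rule parseval)
  ultimately show ?thesis
    by (simp add: sum_distrib_left mult_ac)
qed

lemma derivation_sum_brackets:
  assumes "is_derivation br D" and antisym: "\<And>x y. br y x = - br x y"
  shows "(\<Sum>i\<in>I. \<Sum>p\<in>I. ip (D (br (u i) (u p))) (br (u i) (u p)))
       = 2 * (\<Sum>i\<in>I. \<Sum>p\<in>I. ip (br (D (u i)) (u p)) (br (u i) (u p)))"
proof -
  have leibniz: "D (br x y) = br (D x) y + br x (D y)" for x y
    using assms(1) unfolding is_derivation_def by simp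
  have "ip (br (u i) (D (u p))) (br (u i) (u p)) = ip (br (D (u p)) (u i)) (br (u p) (u i))" for i p
    using antisym[of "u i"] antisym[of "u i" "u p"] by (simp add: ip_simps)
  then have "(\<Sum>i\<in>I. \<Sum>p\<in>I. ip (br (u i) (D (u p))) (br (u i) (u p)))
      = (\<Sum>i\<in>I. \<Sum>p\<in>I. ip (br (D (u p)) (u i)) (br (u p) (u i)))"
    by simp
  also have "\<dots> = (\<Sum>p\<in>I. \<Sum>i\<in>I. ip (br (D (u p)) (u i)) (br (u p) (u i)))"
    by (rule sum.swap)
  finally show ?thesis
    by (simp add: leibniz ip_simps sum.distrib)
qed

end

locale nilpotent_ricci_frame = bracket_frame +
  assumes br_commute: "br y x = - br x y"
    and ric_tensor_frame_nilpotent: "l \<in> I \<Longrightarrow> j \<in> I \<Longrightarrow> ric_tensor br ip (u l) (u j) =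
      (\<Sum>i\<in>I. \<Sum>p\<in>I. structure_constant br ip u i p l * structure_constant br ip u i p j) / 4
      - (\<Sum>p\<in>I. \<Sum>k\<in>I. structure_constant br ip u l p k * structure_constant br ip u j p k) / 2"
begin

lemma structure_constant_commute: "\<mu> p i k = - \<mu> i p k"
  unfolding structure_constant_def by (subst br_commute) (simp add: ip_simps)

lemma sum_weighted_ric_tensor:
  "(\<Sum>j\<in>I. w j * ric_tensor br ip (u j) (u j))
    = (\<Sum>i\<in>I. \<Sum>p\<in>I. \<Sum>k\<in>I. (w k - w i - w p) * (\<mu> i p k)\<^sup>2) / 4"
proof -
  have A: "(\<Sum>j\<in>I. w j * (\<Sum>i\<in>I. \<Sum>p\<in>I. \<mu> i p j * \<mu> i p j))
      = (\<Sum>i\<in>I. \<Sum>p\<in>I. \<Sum>k\<in>I. w k * (\<mu> i p k)\<^sup>2)"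
    unfolding sum_distrib_left power2_eq_square mult.assoc by (rule sum_rotate_3)
  have "(\<Sum>i\<in>I. \<Sum>p\<in>I. \<Sum>k\<in>I. w i * (\<mu> i p k)\<^sup>2) = (\<Sum>p\<in>I. \<Sum>i\<in>I. \<Sum>k\<in>I. w i * (\<mu> i p k)\<^sup>2)"
    by (rule sum.swap)
  also have "\<dots> = (\<Sum>i\<in>I. \<Sum>p\<in>I. \<Sum>k\<in>I. w p * (\<mu> i p k)\<^sup>2)"
  proof -
    have "(\<mu> p i k)\<^sup>2 = (\<mu> i p k)\<^sup>2" for i p k
      by (simp add: structure_constant_commute[of p i k])
    then show ?thesis by simp
  qed
  finally have B: "(\<Sum>i\<in>I. \<Sum>p\<in>I. \<Sum>k\<in>I. w i * (\<mu> i p k)\<^sup>2) = (\<Sum>i\<in>I. \<Sum>p\<in>I. \<Sum>k\<in>I. w p * (\<mu> i p k)\<^sup>2)" .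
  have "(\<Sum>j\<in>I. w j * ric_tensor br ip (u j) (u j))
      = (\<Sum>j\<in>I. w j * (\<Sum>i\<in>I. \<Sum>p\<in>I. \<mu> i p j * \<mu> i p j)) / 4
        - (\<Sum>i\<in>I. \<Sum>p\<in>I. \<Sum>k\<in>I. w i * (\<mu> i p k)\<^sup>2) / 2"
    by (simp add: ric_tensor_frame_nilpotent right_diff_distrib sum_subtractf sum_divide_distrib
        sum_distrib_left power2_eq_square mult_ac)
  then show ?thesis
    unfolding A using B by (simp add: left_diff_distrib sum_subtractf)
qed

lemma sum_ric_tensor_derivation:
  assumes "is_derivation br D"
  shows "(\<Sum>j\<in>I. ric_tensor br ip (D (u j)) (u j)) = 0"
proof -
  have lin: "linear D" using assms unfolding is_derivation_def by simp
  have "(\<Sum>j\<in>I. ric_tensor br ip (D (u j)) (u j))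
      = (\<Sum>j\<in>I. \<Sum>l\<in>I. ip (D (u j)) (u l) * ric_tensor br ip (u l) (u j))"
    by (subst linear_frame_expansion[OF linear_ric_tensor]) simp
  also have "\<dots> = (\<Sum>j\<in>I. \<Sum>l\<in>I. ip (D (u j)) (u l) * (\<Sum>i\<in>I. \<Sum>p\<in>I. \<mu> i p l * \<mu> i p j)) / 4
      - (\<Sum>j\<in>I. \<Sum>l\<in>I. ip (D (u j)) (u l) * (\<Sum>p\<in>I. \<Sum>k\<in>I. \<mu> l p k * \<mu> j p k)) / 2"
    by (simp add: ric_tensor_frame_nilpotent right_diff_distrib sum_subtractf sum_divide_distrib
        sum_distrib_left)
  finally show ?thesis
    unfolding sum_ip_derivation_brackets[OF lin] sum_ip_brackets_derivation[OF lin]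
    using derivation_sum_brackets[OF assms br_commute] by simp
qed

end

section \<open>The algebra in coordinates\<close>

declare One_nat_def [simp del]

lemma sum_1_7: "sum f {1..7::nat} = f 1 + f 2 + f 3 + f 4 + f 5 + f 6 + f 7"
  by (simp add: numeral_eq_Suc add.assoc One_nat_def)

lemma ball_1_7: "(\<forall>k\<in>{1..7::nat}. P k) \<longleftrightarrow> P 1 \<and> P 2 \<and> P 3 \<and> P 4 \<and> P 5 \<and> P 6 \<and> P 7"
proof -
  have "{1..7::nat} = {1, 2, 3, 4, 5, 6, 7}" by auto
  then show ?thesis by simp
qed

lemma exhaust_7: "(x::7) = 0 \<or> x = 1 \<or> x = 2 \<or> x = 3 \<or> x = 4 \<or> x = 5 \<or> x = 6"
proof (induct x)
  case (of_int z)
  then have "z = 0 \<or> z = 1 \<or> z = 2 \<or> z = 3 \<or> z = 4 \<or> z = 5 \<or> z = 6" by fastforce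
  then show ?case by auto
qed

lemma coord_eqI:
  assumes "\<forall>k\<in>{1..7}. coord k x = coord k y"
  shows "x = y"
proof -
  have "x $ i = y $ i" for i
    using exhaust_7[of i] assms unfolding ball_1_7 coord_def by auto
  then show ?thesis by (simp add: vec_eq_iff)
qed

lemma coord_add [simp]: "coord k (x + y) = coord k x + coord k y"
  and coord_diff [simp]: "coord k (x - y) = coord k x - coord k y"
  and coord_scaleR [simp]: "coord k (c *\<^sub>R x) = c * coord k x"
  and coord_minus [simp]: "coord k (- x) = - coord k x"
  and coord_zero [simp]: "coord k 0 = 0"
  and coord_sum [simp]: "coord k (sum f S) = (\<Sum>i\<in>S. coord k (f i))"
  by (simp_all add: coord_def sum_component)

lemma coord_ebas [simp]:
  "k \<in> {1..7} \<Longrightarrow> m \<in> {1..7} \<Longrightarrow> coord k (ebas m) = (if k = m then 1 else 0)"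
proof -
  have "\<forall>k\<in>{1..7}. \<forall>m\<in>{1..7}. coord k (ebas m) = (if k = m then 1 else 0)"
    unfolding ball_1_7 by (simp add: coord_def ebas_def axis_def)
  then show "k \<in> {1..7} \<Longrightarrow> m \<in> {1..7} \<Longrightarrow> ?thesis" by blast
qed

lemma coord_nbr:
  "coord 1 (nbr x y) = 0" "coord 2 (nbr x y) = 0" "coord 3 (nbr x y) = 0"
  "coord 4 (nbr x y) = coord 1 x * coord 2 y - coord 2 x * coord 1 y"
  "coord 5 (nbr x y) = coord 1 x * coord 3 y - coord 3 x * coord 1 y"
  "coord 6 (nbr x y) = coord 1 x * coord 4 y - coord 4 x * coord 1 y
     + coord 2 x * coord 3 y - coord 3 x * coord 2 y"
  "coord 7 (nbr x y) = coord 1 x * coord 6 y - coord 6 x * coord 1 y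
     + coord 2 x * coord 4 y - coord 4 x * coord 2 y
     + (coord 2 x * coord 5 y - coord 5 x * coord 2 y) / 2
     - (coord 3 x * coord 4 y - coord 4 x * coord 3 y) / 2"
  unfolding nbr_def sum_1_7
  by (simp_all add: cbr_def cpos_def field_simps)

lemma ebas_expansion: "x = (\<Sum>m\<in>{1..7}. coord m x *\<^sub>R ebas m)"
  by (rule coord_eqI) (simp add: ball_1_7 sum_1_7)

lemma nbr_commute: "nbr y x = - nbr x y"
  by (rule coord_eqI) (simp add: ball_1_7 coord_nbr field_simps)

lemma bilinear_nbr: "bilinear nbr"
  unfolding bilinear_def
  by (intro allI conjI linearI coord_eqI; simp add: ball_1_7 coord_nbr field_simps)

definition flag_space :: "nat \<Rightarrow> (real^7) set" where
  "flag_space k = {x. \<forall>m. 1 \<le> m \<and> m < k \<longrightarrow> coord m x = 0}"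

lemma subspace_flag_space: "subspace (flag_space k)"
  unfolding subspace_def flag_space_def by simp

lemma flag_space_Suc:
  "x \<in> flag_space (Suc k) \<longleftrightarrow> x \<in> flag_space k \<and> (1 \<le> k \<longrightarrow> coord k x = 0)"
  unfolding flag_space_def using less_Suc_eq by auto

lemma flag_space_antimono: "k \<le> m \<Longrightarrow> flag_space m \<subseteq> flag_space k"
  unfolding flag_space_def by auto

lemma flag_space_trivial [simp]: "k \<le> 1 \<Longrightarrow> flag_space k = UNIV"
  unfolding flag_space_def by auto

lemma flag_space_simps:
  "x \<in> flag_space 2 \<longleftrightarrow> coord 1 x = 0"
  "x \<in> flag_space 3 \<longleftrightarrow> coord 1 x = 0 \<and> coord 2 x = 0"
  "x \<in> flag_space 4 \<longleftrightarrow> coord 1 x = 0 \<and> coord 2 x = 0 \<and> coord 3 x = 0"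
  "x \<in> flag_space 5 \<longleftrightarrow> coord 1 x = 0 \<and> coord 2 x = 0 \<and> coord 3 x = 0 \<and> coord 4 x = 0"
  "x \<in> flag_space 6 \<longleftrightarrow> coord 1 x = 0 \<and> coord 2 x = 0 \<and> coord 3 x = 0 \<and> coord 4 x = 0
      \<and> coord 5 x = 0"
  "x \<in> flag_space 7 \<longleftrightarrow> coord 1 x = 0 \<and> coord 2 x = 0 \<and> coord 3 x = 0 \<and> coord 4 x = 0
      \<and> coord 5 x = 0 \<and> coord 6 x = 0"
  "x \<in> flag_space 8 \<longleftrightarrow> coord 1 x = 0 \<and> coord 2 x = 0 \<and> coord 3 x = 0 \<and> coord 4 x = 0
      \<and> coord 5 x = 0 \<and> coord 6 x = 0 \<and> coord 7 x = 0"
  by (simp_all add: flag_space_Suc numeral_eq_Suc One_nat_def)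

lemma flag_space_8: "flag_space 8 = {0}"
  using coord_eqI[of _ 0] unfolding ball_1_7 by (auto simp: flag_space_simps)

lemma ebas_in_flag_space: "k \<in> {1..7} \<Longrightarrow> ebas k \<in> flag_space k"
  unfolding flag_space_def by auto

lemma flag_space_decompose:
  assumes "x \<in> flag_space k" "w \<in> flag_space k" "coord k w \<noteq> 0"
  shows "x - (coord k x / coord k w) *\<^sub>R w \<in> flag_space (Suc k)"
  using assms unfolding flag_space_Suc
  by (auto intro: subspace_diff subspace_mul subspace_flag_space)

text \<open>\<open>[flag_space i, flag_space j] \<subseteq> flag_space (bracket_level i j)\<close>, read off from the brackets.\<close>

definition bracket_level_ord :: "nat \<Rightarrow> nat \<Rightarrow> nat" where
  "bracket_level_ord i j =
    (if i = 1 then (if j \<le> 2 then 4 else if j = 3 then 5 else if j = 4 then 6 else if j \<le> 6 then 7 else 8)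
     else if i = 2 then (if j \<le> 3 then 6 else if j \<le> 5 then 7 else 8)
     else if i = 3 then (if j \<le> 4 then 7 else 8)
     else 8)"

definition bracket_level :: "nat \<Rightarrow> nat \<Rightarrow> nat" where
  "bracket_level i j = (if j < i then bracket_level_ord j i else bracket_level_ord i j)"

lemma nbr_in_flag_space:
  assumes "i \<in> {1..7}" "j \<in> {1..7}" "x \<in> flag_space i" "y \<in> flag_space j"
  shows "nbr x y \<in> flag_space (bracket_level i j)"
proof -
  have "\<forall>i\<in>{1..7}. \<forall>j\<in>{1..7}. \<forall>x\<in>flag_space i. \<forall>y\<in>flag_space j.
      nbr x y \<in> flag_space (bracket_level i j)"
    unfolding ball_1_7 by (simp add: flag_space_simps coord_nbr bracket_level_def bracket_level_ord_def)
  then show ?thesis using assms by blast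
qed

text \<open>The structure constants strictly raise the flag index, so in the Koszul expression of the
  Ricci tensor the terms coming from the mean curvature and from the Killing form vanish.\<close>

lemma nilpotent_ricci_sum:
  fixes \<mu> :: "nat \<Rightarrow> nat \<Rightarrow> nat \<Rightarrow> real"
  assumes anti: "\<And>i j k. i < j \<Longrightarrow> \<mu> j i k = - \<mu> i j k"
    and diag: "\<And>i k. \<mu> i i k = 0"
    and zero: "\<And>i j k. i \<in> {1..7} \<Longrightarrow> j \<in> {1..7} \<Longrightarrow> k \<in> {1..7} \<Longrightarrow> k < bracket_level i j \<Longrightarrow> \<mu> i j k = 0"
  shows "\<forall>l\<in>{1..7}. \<forall>j\<in>{1..7}.
    (\<Sum>i\<in>{1..7}. (\<Sum>k\<in>{1..7}. koszul_coeff \<mu> l j k * koszul_coeff \<mu> i k i)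
        - (\<Sum>k\<in>{1..7}. koszul_coeff \<mu> i j k * koszul_coeff \<mu> l k i)
        - (\<Sum>m\<in>{1..7}. \<mu> i l m * koszul_coeff \<mu> m j i))
    = (\<Sum>i\<in>{1..7}. \<Sum>p\<in>{1..7}. \<mu> i p l * \<mu> i p j) / 4
      - (\<Sum>p\<in>{1..7}. \<Sum>k\<in>{1..7}. \<mu> l p k * \<mu> j p k) / 2"
  unfolding ball_1_7 sum_1_7 koszul_coeff_def
  by (simp add: anti diag zero bracket_level_def bracket_level_ord_def field_simps)

section \<open>Derivations\<close>

definition flag_weight :: "nat \<Rightarrow> real" where
  "flag_weight k = (if k = 1 then 1 else if k \<le> 3 then 2 else if k \<le> 5 then 3 else if k = 6 then 4 else 5)"

lemma derivation_flag_space: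
  assumes "is_derivation nbr D"
  obtains t where
    "\<And>i x. i \<in> {1..7} \<Longrightarrow> x \<in> flag_space i \<Longrightarrow> D x - (t * flag_weight i) *\<^sub>R x \<in> flag_space (Suc i)"
proof -
  have lin: "linear D" and leibniz: "\<And>x y. D (nbr x y) = nbr (D x) y + nbr x (D y)"
    using assms unfolding is_derivation_def by auto
  define M where "M k m = coord k (D (ebas m))" for k m
  have D_coord: "coord r (D z) = (\<Sum>m\<in>{1..7}. coord m z * M r m)" for r z
  proof -
    have "D z = (\<Sum>m\<in>{1..7}. coord m z *\<^sub>R D (ebas m))"
      by (subst ebas_expansion) (simp add: linear_sum[OF lin] linear_scale[OF lin])
    then show ?thesis by (simp add: M_def)
  qed
  have eq: "(\<Sum>m\<in>{1..7}. coord m (nbr (ebas p) (ebas q)) * M r m)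
     = coord r (nbr (D (ebas p)) (ebas q)) + coord r (nbr (ebas p) (D (ebas q)))" for p q r
    using leibniz[of "ebas p" "ebas q"] D_coord[of r "nbr (ebas p) (ebas q)"] by simp
  note eqs = eq[of 1 2 1] eq[of 1 2 2] eq[of 1 2 3] eq[of 1 2 4] eq[of 1 2 5]
    eq[of 1 3 1] eq[of 1 3 2] eq[of 1 3 3] eq[of 1 3 4] eq[of 1 3 5]
    eq[of 1 4 1] eq[of 1 4 2] eq[of 1 4 3] eq[of 1 4 4] eq[of 1 4 5] eq[of 1 4 6]
    eq[of 1 5 6] eq[of 1 6 1] eq[of 1 6 2] eq[of 1 6 3] eq[of 1 6 4] eq[of 1 6 5]
    eq[of 1 6 6] eq[of 1 6 7] eq[of 2 3 4] eq[of 2 3 5] eq[of 2 3 6] eq[of 2 4 7]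
  note eqs' = eqs[unfolded sum_1_7 coord_nbr, simplified, folded M_def]
  have upper: "M 1 2 = 0" "M 1 3 = 0" "M 1 4 = 0" "M 1 5 = 0" "M 1 6 = 0" "M 1 7 = 0"
    "M 2 3 = 0" "M 2 4 = 0" "M 2 5 = 0" "M 2 6 = 0" "M 2 7 = 0" "M 3 4 = 0" "M 3 5 = 0"
    "M 3 6 = 0" "M 3 7 = 0" "M 4 5 = 0" "M 4 6 = 0" "M 4 7 = 0" "M 5 6 = 0" "M 5 7 = 0" "M 6 7 = 0"
    using eqs' by linarith+
  have diagonal: "M 2 2 = 2 * M 1 1" "M 3 3 = 2 * M 1 1" "M 4 4 = 3 * M 1 1" "M 5 5 = 3 * M 1 1"
    "M 6 6 = 4 * M 1 1" "M 7 7 = 5 * M 1 1"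
    using eqs' upper by linarith+
  have "\<forall>i\<in>{1..7}. \<forall>x\<in>flag_space i. D x - (M 1 1 * flag_weight i) *\<^sub>R x \<in> flag_space (Suc i)"
    unfolding ball_1_7 by (simp add: flag_space_simps D_coord sum_1_7 upper diagonal flag_weight_def)
  then show thesis using that by blast
qed

lemma derivation_flag_space_invariant:
  assumes lin: "linear D"
    and diag: "\<And>i x. i \<in> {1..7} \<Longrightarrow> x \<in> flag_space i \<Longrightarrow> D x - (t * flag_weight i) *\<^sub>R x \<in> flag_space (Suc i)"
    and "k \<le> 8" "x \<in> flag_space k"
  shows "D x \<in> flag_space k"
proof -
  consider "k \<le> 1" | "k = 8" | "k \<in> {1..7}"
    using \<open>k \<le> 8\<close> by force
  then show ?thesis
  proof cases
    case 2
    then show ?thesis using assms(4) linear_0[OF lin] flag_space_8 by simp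
  next
    case 3
    have "D x = (D x - (t * flag_weight k) *\<^sub>R x) + (t * flag_weight k) *\<^sub>R x"
      by simp
    also have "\<dots> \<in> flag_space k"
      using diag[OF 3 assms(4)] flag_space_antimono[of k "Suc k"] assms(4)
      by (intro subspace_add[OF subspace_flag_space] subspace_mul[OF subspace_flag_space]) auto
    finally show ?thesis .
  qed simp
qed

section \<open>Orthonormal frames adapted to the flag\<close>

text \<open>Gram-Schmidt runs from \<open>e\<^sub>7\<close> down to \<open>e\<^sub>1\<close>; \<open>adapted_frame ip u m\<close> is the invariant once
  \<open>u\<^sub>m, ..., u\<^sub>7\<close> have been constructed.\<close>

definition adapted_frame :: "(real^7 \<Rightarrow> real^7 \<Rightarrow> real) \<Rightarrow> (nat \<Rightarrow> real^7) \<Rightarrow> nat \<Rightarrow> bool" where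
  "adapted_frame ip u m \<longleftrightarrow>
     (\<forall>i\<in>{m..7}. \<forall>j\<in>{m..7}. ip (u i) (u j) = (if i = j then 1 else 0)) \<and>
     (\<forall>i\<in>{m..7}. u i \<in> flag_space i) \<and>
     (\<forall>k\<in>{m..8}. \<forall>x\<in>flag_space k. x = (\<Sum>j\<in>{k..7}. ip x (u j) *\<^sub>R u j))"

lemma adapted_frame_orthonormal:
  "adapted_frame ip u m \<Longrightarrow> i \<in> {m..7} \<Longrightarrow> j \<in> {m..7} \<Longrightarrow> ip (u i) (u j) = (if i = j then 1 else 0)"
  and adapted_frame_in_flag_space: "adapted_frame ip u m \<Longrightarrow> i \<in> {m..7} \<Longrightarrow> u i \<in> flag_space i"
  and adapted_frame_expansion: "adapted_frame ip u m \<Longrightarrow> k \<in> {m..8} \<Longrightarrow> x \<in> flag_space k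
    \<Longrightarrow> x = (\<Sum>j\<in>{k..7}. ip x (u j) *\<^sub>R u j)"
  unfolding adapted_frame_def by blast+

context
  fixes ip :: "real^7 \<Rightarrow> real^7 \<Rightarrow> real"
  assumes inner_product: "inner_product_form ip"
begin

interpretation inner_product_form ip
  by (fact inner_product)

lemma adapted_frame_residual:
  assumes u: "adapted_frame ip u (Suc n)" and n: "n \<in> {1..7}"
  obtains w where "w \<in> flag_space n" "coord n w \<noteq> 0" "ip w w = 1"
    "\<And>k. k \<in> {Suc n..7} \<Longrightarrow> ip w (u k) = 0"
proof -
  define v where "v = ebas n - (\<Sum>k\<in>{Suc n..7}. ip (ebas n) (u k) *\<^sub>R u k)"
  have u_flag: "u k \<in> flag_space (Suc n)" if "k \<in> {Suc n..7}" for k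
    using adapted_frame_in_flag_space[OF u that] flag_space_antimono[of "Suc n" k] that by auto
  then have "v \<in> flag_space n"
    using flag_space_antimono[of n "Suc n"] ebas_in_flag_space[OF n] unfolding v_def
    by (auto intro!: subspace_diff subspace_sum subspace_mul subspace_flag_space)
  moreover have "coord n v = 1"
    using u_flag n unfolding v_def flag_space_Suc by simp
  moreover have "ip v (u k) = 0" if "k \<in> {Suc n..7}" for k
    unfolding v_def using adapted_frame_orthonormal[OF u] that by (intro ip_residual_frame) auto
  moreover have "ip v v > 0"
    using \<open>coord n v = 1\<close> by (intro ip_self_pos) auto
  ultimately show thesis
    by (intro that[of "(1 / sqrt (ip v v)) *\<^sub>R v"])
      (auto simp: ip_simps subspace_mul subspace_flag_space real_sqrt_mult_self field_simps)
qed

lemma adapted_frame_step: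
  assumes u: "adapted_frame ip u (Suc n)" and n: "n \<in> {1..7}"
  obtains w where "adapted_frame ip (u(n := w)) n"
proof -
  obtain w where w: "w \<in> flag_space n" "coord n w \<noteq> 0" "ip w w = 1"
    and w_orth: "\<And>k. k \<in> {Suc n..7} \<Longrightarrow> ip w (u k) = 0"
    using adapted_frame_residual[OF u n] by blast
  let ?u = "u(n := w)"
  have interval: "{n..7} = insert n {Suc n..7}" "{n..8} = insert n {Suc n..8}"
    using n by auto
  have "adapted_frame ip ?u n"
    unfolding adapted_frame_def
  proof (intro conjI ballI)
    fix i j
    assume "i \<in> {n..7}" "j \<in> {n..7}"
    then show "ip (?u i) (?u j) = (if i = j then 1 else 0)"
      using adapted_frame_orthonormal[OF u] w(3) w_orth[of i] w_orth[of j] ip_commute[of "u i" w]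
      unfolding interval by (cases "i = n"; cases "j = n") auto
  next
    fix i
    assume "i \<in> {n..7}"
    then show "?u i \<in> flag_space i"
      using adapted_frame_in_flag_space[OF u] w(1) unfolding interval by auto
  next
    fix k x
    assume k: "k \<in> {n..8}" and x: "x \<in> flag_space k"
    show "x = (\<Sum>j\<in>{k..7}. ip x (?u j) *\<^sub>R ?u j)"
    proof (cases "k = n")
      case True
      have "Suc n \<in> {Suc n..8}" using n by simp
      then show ?thesis
        unfolding True interval(1) using x True
        by (intro frame_expansion_insert[OF adapted_frame_expansion[OF u] w(3) w_orth _ _
              flag_space_decompose[OF _ w(1,2)]]) auto
    next
      case False
      then have "k \<in> {Suc n..8}" using k by auto
      then have "x = (\<Sum>j\<in>{k..7}. ip x (u j) *\<^sub>R u j)"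
        using adapted_frame_expansion[OF u _ x] by blast
      also have "\<dots> = (\<Sum>j\<in>{k..7}. ip x (?u j) *\<^sub>R ?u j)"
        using \<open>k \<in> {Suc n..8}\<close> by (intro sum.cong) auto
      finally show ?thesis .
    qed
  qed
  then show thesis by (rule that)
qed

lemma adapted_frame_exists: "\<exists>u. adapted_frame ip u 1"
proof -
  have "\<exists>u. adapted_frame ip u m" if "1 \<le> m" "m \<le> 8" for m
    using that(2,1)
  proof (induction m rule: inc_induct)
    case base
    show ?case by (auto simp: adapted_frame_def flag_space_8)
  next
    case (step n)
    then obtain u where "adapted_frame ip u (Suc n)" by auto
    moreover have "n \<in> {1..7}"
      using step.hyps(2) step.prems by auto
    ultimately show ?case
      by (blast elim: adapted_frame_step)
  qed
  then show ?thesis by simp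
qed

end

section \<open>The Ricci tensor in an adapted frame\<close>

locale adapted_nbr_frame = inner_product_form ip
  for ip :: "real^7 \<Rightarrow> real^7 \<Rightarrow> real" +
  fixes u :: "nat \<Rightarrow> real^7"
  assumes adapted_frame: "adapted_frame ip u 1"
begin

lemmas orthonormal_u = adapted_frame_orthonormal[OF adapted_frame]
  and u_in_flag_space = adapted_frame_in_flag_space[OF adapted_frame]
  and flag_space_expansion = adapted_frame_expansion[OF adapted_frame]

lemma ip_flag_space_Suc:
  assumes k: "k \<in> {1..7}" and y: "y \<in> flag_space (Suc k)"
  shows "ip y (u k) = 0"
proof -
  have "y = (\<Sum>j\<in>{Suc k..7}. ip y (u j) *\<^sub>R u j)"
    using k y by (intro flag_space_expansion) auto
  then have "ip y (u k) = ip (\<Sum>j\<in>{Suc k..7}. ip y (u j) *\<^sub>R u j) (u k)"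
    by (rule arg_cong)
  also have "\<dots> = (\<Sum>j\<in>{Suc k..7}. ip y (u j) * ip (u j) (u k))"
    by (simp add: ip_simps)
  also have "\<dots> = 0"
    using k by (intro sum.neutral) (auto simp: orthonormal_u)
  finally show ?thesis .
qed

end

sublocale adapted_nbr_frame \<subseteq> bracket_frame ip u "{1..7}" nbr
proof
  show "ip (u i) (u j) = (if i = j then 1 else 0)" if "i \<in> {1..7}" "j \<in> {1..7}" for i j
    using orthonormal_u that .
  show "x = (\<Sum>k\<in>{1..7}. ip x (u k) *\<^sub>R u k)" for x
    using flag_space_expansion[of 1 x] by simp
qed (fact bilinear_nbr)

context adapted_nbr_frame
begin

lemma structure_constant_below_level:
  assumes "i \<in> {1..7}" "j \<in> {1..7}" "k \<in> {1..7}" "k < bracket_level i j"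
  shows "\<mu> i j k = 0"
proof -
  have "nbr (u i) (u j) \<in> flag_space (Suc k)"
    using nbr_in_flag_space[OF assms(1,2) u_in_flag_space u_in_flag_space] assms
      flag_space_antimono[of "Suc k" "bracket_level i j"] by auto
  then show ?thesis
    unfolding structure_constant_def using ip_flag_space_Suc assms(3) by blast
qed

end

sublocale adapted_nbr_frame \<subseteq> nilpotent_ricci_frame ip u "{1..7}" nbr
proof
  show "nbr y x = - nbr x y" for x y by (fact nbr_commute)
  have commute: "\<mu> j i k = - \<mu> i j k" for i j k
    unfolding structure_constant_def by (subst nbr_commute) (simp add: ip_simps)
  have diag: "\<mu> i i k = 0" for i k
    using commute[of i i k] by simp
  have "\<forall>l\<in>{1..7}. \<forall>j\<in>{1..7}. ric_tensor nbr ip (u l) (u j) =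
      (\<Sum>i\<in>{1..7}. \<Sum>p\<in>{1..7}. \<mu> i p l * \<mu> i p j) / 4
      - (\<Sum>p\<in>{1..7}. \<Sum>k\<in>{1..7}. \<mu> l p k * \<mu> j p k) / 2"
    unfolding ric_tensor_frame
    by (rule nilpotent_ricci_sum, rule commute, rule diag, rule structure_constant_below_level)
  then show "ric_tensor nbr ip (u l) (u j) =
      (\<Sum>i\<in>{1..7}. \<Sum>p\<in>{1..7}. \<mu> i p l * \<mu> i p j) / 4
      - (\<Sum>p\<in>{1..7}. \<Sum>k\<in>{1..7}. \<mu> l p k * \<mu> j p k) / 2"
    if "l \<in> {1..7}" "j \<in> {1..7}" for l j
    using that by blast
qed

definition bracket_weight :: "nat \<Rightarrow> real" where
  "bracket_weight k = (if k \<le> 2 then 1 else if k \<le> 4 then 2 else if k \<le> 6 then 3 else 4)"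

lemma bracket_weight_superadditive:
  "i \<in> {1..7} \<Longrightarrow> p \<in> {1..7} \<Longrightarrow> k \<in> {1..7} \<Longrightarrow> bracket_level i p \<le> k
    \<Longrightarrow> bracket_weight i + bracket_weight p \<le> bracket_weight k"
proof -
  have "\<forall>i\<in>{1..7}. \<forall>p\<in>{1..7}. \<forall>k\<in>{1..7}. bracket_level i p \<le> k
      \<longrightarrow> bracket_weight i + bracket_weight p \<le> bracket_weight k"
    unfolding ball_1_7 by (simp add: bracket_level_def bracket_level_ord_def bracket_weight_def)
  then show "i \<in> {1..7} \<Longrightarrow> p \<in> {1..7} \<Longrightarrow> k \<in> {1..7} \<Longrightarrow> bracket_level i p \<le> k \<Longrightarrow> ?thesis"
    by blast
qed

context adapted_nbr_frame
begin

lemma weighted_sum_ric_tensor_nonneg: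
  "0 \<le> (\<Sum>j\<in>{1..7}. bracket_weight j * ric_tensor nbr ip (u j) (u j))"
proof -
  have term_nonneg: "0 \<le> (bracket_weight k - bracket_weight i - bracket_weight p) * (\<mu> i p k)\<^sup>2"
    if "i \<in> {1..7}" "p \<in> {1..7}" "k \<in> {1..7}" for i p k
    using that bracket_weight_superadditive[OF that] structure_constant_below_level[OF that]
    by (cases "k < bracket_level i p") auto
  show ?thesis
    unfolding sum_weighted_ric_tensor by (intro divide_nonneg_pos sum_nonneg term_nonneg) auto
qed

lemma structure_constant_1_2_4_nonzero: "\<mu> 1 2 4 \<noteq> 0"
proof -
  have coord_diag: "coord i (u i) \<noteq> 0" if i: "i \<in> {1..7}" for i
  proof
    assume "coord i (u i) = 0"
    then have "u i \<in> flag_space (Suc i)"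
      using u_in_flag_space[OF i] i unfolding flag_space_Suc by auto
    then show False
      using ip_flag_space_Suc[OF i] orthonormal_u[OF i i] by simp
  qed
  define X where "X = nbr (u 1) (u 2)"
  have "X \<in> flag_space 4"
    unfolding X_def using nbr_in_flag_space[of 1 2] u_in_flag_space
    by (simp add: bracket_level_def bracket_level_ord_def)
  then have "X = (\<Sum>k\<in>{4..7}. ip X (u k) *\<^sub>R u k)"
    by (intro flag_space_expansion) auto
  then have "coord 4 X = coord 4 (\<Sum>k\<in>{4..7}. ip X (u k) *\<^sub>R u k)"
    by (rule arg_cong)
  also have "\<dots> = (\<Sum>k\<in>{4..7}. ip X (u k) * coord 4 (u k))"
    by simp
  also have "\<dots> = ip X (u 4) * coord 4 (u 4)"
  proof -
    have "{4..7::nat} = {4, 5, 6, 7}" by auto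
    then show ?thesis
      using u_in_flag_space[of 5] u_in_flag_space[of 6] u_in_flag_space[of 7]
      by (simp add: flag_space_simps)
  qed
  finally have "coord 4 X = \<mu> 1 2 4 * coord 4 (u 4)"
    unfolding X_def structure_constant_def .
  moreover have "coord 4 X \<noteq> 0"
    using u_in_flag_space[of 2] coord_diag[of 1] coord_diag[of 2]
    unfolding X_def by (simp add: coord_nbr flag_space_simps)
  ultimately show ?thesis by auto
qed

lemma sum_ric_tensor_neg: "(\<Sum>j\<in>{1..7}. ric_tensor nbr ip (u j) (u j)) < 0"
proof -
  have "(\<mu> 1 2 4)\<^sup>2 \<le> (\<Sum>k\<in>{1..7}. (\<mu> 1 2 k)\<^sup>2)"
    by (rule member_le_sum[of 4]) auto
  also have "\<dots> \<le> (\<Sum>p\<in>{1..7}. \<Sum>k\<in>{1..7}. (\<mu> 1 p k)\<^sup>2)"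
    by (rule member_le_sum[of 2]) (auto intro!: sum_nonneg)
  also have "\<dots> \<le> (\<Sum>i\<in>{1..7}. \<Sum>p\<in>{1..7}. \<Sum>k\<in>{1..7}. (\<mu> i p k)\<^sup>2)"
    by (rule member_le_sum[of 1]) (auto intro!: sum_nonneg)
  finally have "(\<mu> 1 2 4)\<^sup>2 \<le> (\<Sum>i\<in>{1..7}. \<Sum>p\<in>{1..7}. \<Sum>k\<in>{1..7}. (\<mu> i p k)\<^sup>2)" .
  moreover have "0 < (\<mu> 1 2 4)\<^sup>2"
    using structure_constant_1_2_4_nonzero by simp
  ultimately have "0 < (\<Sum>i\<in>{1..7}. \<Sum>p\<in>{1..7}. \<Sum>k\<in>{1..7}. (\<mu> i p k)\<^sup>2)"
    by linarith
  then show ?thesis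
    using sum_weighted_ric_tensor[of "\<lambda>_. 1"] by (simp add: sum_negf)
qed

end

lemma nilsoliton_constraints_unsatisfiable:
  fixes c t :: real
  assumes "7 * c + 20 * t < 0" "0 \<le> 16 * c + 54 * t" "20 * c * t + 68 * t\<^sup>2 = 0"
  shows False
proof (cases "t = 0")
  case False
  have "t * (20 * c + 68 * t) = 0"
    using assms(3) by (simp add: power2_eq_square algebra_simps)
  then have "20 * c + 68 * t = 0"
    using False by simp
  then show False using assms(1,2) by linarith
qed (use assms in simp)

context adapted_nbr_frame
begin

context
  fixes D :: "real^7 \<Rightarrow> real^7" and c t :: real
  assumes derivation: "is_derivation nbr D"
    and diag: "\<And>i x. i \<in> {1..7} \<Longrightarrow> x \<in> flag_space i \<Longrightarrow> D x - (t * flag_weight i) *\<^sub>R x \<in> flag_space (Suc i)"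
    and soliton: "\<And>Y Z. ric_tensor nbr ip Y Z = ip (c *\<^sub>R Y + D Y) Z"
begin

lemma derivation_frame_diagonal:
  assumes i: "i \<in> {1..7}"
  shows "ip (D (u i)) (u i) = t * flag_weight i"
    and "ip (D (D (u i))) (u i) = (t * flag_weight i)\<^sup>2"
proof -
  have lin: "linear D" using derivation unfolding is_derivation_def by simp
  define s where "s = t * flag_weight i"
  define y where "y = D (u i) - s *\<^sub>R u i"
  have y: "y \<in> flag_space (Suc i)"
    unfolding y_def s_def using diag[OF i u_in_flag_space[OF i]] .
  have Dy: "D y \<in> flag_space (Suc i)"
    using derivation_flag_space_invariant[OF lin diag _ y] i by simp
  have Du: "D (u i) = y + s *\<^sub>R u i"
    unfolding y_def by simp
  show *: "ip (D (u i)) (u i) = s"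
    unfolding Du using ip_flag_space_Suc[OF i y] orthonormal_u[OF i i] by (simp add: ip_simps)
  have "D (D (u i)) = D (y + s *\<^sub>R u i)"
    using Du by (rule arg_cong)
  also have "\<dots> = D y + s *\<^sub>R D (u i)"
    by (simp add: linear_add[OF lin] linear_scale[OF lin])
  finally show "ip (D (D (u i))) (u i) = s\<^sup>2"
    using ip_flag_space_Suc[OF i Dy] * by (simp add: ip_simps power2_eq_square)
qed

lemma nilsoliton_constraints:
  "7 * c + 20 * t < 0" "0 \<le> 16 * c + 54 * t" "20 * c * t + 68 * t\<^sup>2 = 0"
proof -
  have ric: "ric_tensor nbr ip (u j) (u j) = c + t * flag_weight j"
    and ric_D: "ric_tensor nbr ip (D (u j)) (u j) = c * (t * flag_weight j) + (t * flag_weight j)\<^sup>2"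
    if "j \<in> {1..7}" for j
    using soliton[of "u j" "u j"] soliton[of "D (u j)" "u j"] derivation_frame_diagonal[OF that]
      orthonormal_u[OF that that] by (simp_all add: ip_simps)
  show "7 * c + 20 * t < 0"
    using sum_ric_tensor_neg by (simp add: sum_1_7 ric flag_weight_def)
  show "0 \<le> 16 * c + 54 * t"
    using weighted_sum_ric_tensor_nonneg by (simp add: sum_1_7 ric flag_weight_def bracket_weight_def)
  show "20 * c * t + 68 * t\<^sup>2 = 0"
    using sum_ric_tensor_derivation[OF derivation]
    by (simp add: sum_1_7 ric_D flag_weight_def power2_eq_square algebra_simps)
qed

end

end

theorem mainTheorem5:
  shows "\<not> einstein_nilradical nbr"
proof
  assume "einstein_nilradical nbr"
  then obtain ip c D where ip: "is_inner_product ip" and derivation: "is_derivation nbr D"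
    and soliton: "\<And>Y Z. ric_tensor nbr ip Y Z = ip (c *\<^sub>R Y + D Y) Z"
    unfolding einstein_nilradical_def is_nilsoliton_def by blast
  interpret inner_product_form ip
    using ip by unfold_locales
  obtain u where "adapted_frame ip u 1"
    using adapted_frame_exists[OF inner_product_form_axioms] by blast
  then interpret adapted_nbr_frame ip u
    by unfold_locales
  obtain t where "\<And>i x. i \<in> {1..7} \<Longrightarrow> x \<in> flag_space i \<Longrightarrow> D x - (t * flag_weight i) *\<^sub>R x \<in> flag_space (Suc i)"
    using derivation_flag_space[OF derivation] by blast
  from nilsoliton_constraints[OF derivation this soliton] show False
    by (rule nilsoliton_constraints_unsatisfiable)
qed

end
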